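(* Let $q$ be an odd prime power, $\omega$ a non-square in $\mathbb F_q$, $\epsilon\in\mathbb F_{q^2}$ with $\epsilon^2=\omega$, and write $z=z_1+\epsilon z_2$ ($z_i\in\mathbb F_q$) for $z\in\mathbb F_{q^2}$. Let $\mathcal C: aX^2+bXY+cXZ+dYZ+eZ^2=0$ be a non-singular conic of $\mathrm{PG}(2,q^2)$ with $b\ne0$ and $b_1d_2=b_2d_1$ (i.e. $d/b\in\mathbb F_q$), and assume $(b_1,d_1)\neq(0,0)$. Then the line of $\mathrm{PG}(2,q)$ with equation $b_1X+d_1Z=0$ is the tangent line to $\mathcal C$ at the point $(0:1:0)$; in particular it contains exactly $q$ points of $\mathrm{PG}(2,q)$ external to $\mathcal C$.
   Context: $\mathrm{PG}(2,q)$ is canonically embedded in $\mathrm{PG}(2,q^2)$. A point not on $\mathcal C$ is external if it lies on two tangent lines to $\mathcal C$. The condition $(b_1,d_1)\ne(0,0)$ is the implicit requirement that $b_1X+d_1Z=0$ define a line. *)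

theory Defs
  imports Main "HOL-Computational_Algebra.Primes"
begin

type_synonym 'a vec3 = "'a \<times> 'a \<times> 'a"

definition proj_pt :: "'a::field vec3 \<Rightarrow> 'a vec3 set" where
  "proj_pt v = (case v of (x, y, z) \<Rightarrow> {(c * x, c * y, c * z) | c. c \<noteq> 0})"

text \<open>Points of PG(2,K) for a subfield K (given as a set) of the field 'a:
points having a representative with all coordinates in K.\<close>
definition PG2 :: "'a::field set \<Rightarrow> 'a vec3 set set" where
  "PG2 K = {proj_pt (x, y, z) | x y z. x \<in> K \<and> y \<in> K \<and> z \<in> K \<and> (x, y, z) \<noteq> (0, 0, 0)}"

definition line_of :: "'a::field vec3 \<Rightarrow> 'a vec3 set set" where
  "line_of l = (case l of (l1, l2, l3) \<Rightarrow>
     {proj_pt (x, y, z) | x y z. (x, y, z) \<noteq> (0, 0, 0) \<and> l1 * x + l2 * y + l3 * z = 0})"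

definition conic_form :: "'a::field \<Rightarrow> 'a \<Rightarrow> 'a \<Rightarrow> 'a \<Rightarrow> 'a \<Rightarrow> 'a vec3 \<Rightarrow> 'a" where
  "conic_form a b c d e v = (case v of (x, y, z) \<Rightarrow>
     a * x^2 + b * x * y + c * x * z + d * y * z + e * z^2)"

definition conic_grad :: "'a::field \<Rightarrow> 'a \<Rightarrow> 'a \<Rightarrow> 'a \<Rightarrow> 'a \<Rightarrow> 'a vec3 \<Rightarrow> 'a vec3" where
  "conic_grad a b c d e v = (case v of (x, y, z) \<Rightarrow>
     (2 * a * x + b * y + c * z, b * x + d * z, c * x + d * y + 2 * e * z))"

definition conic_pts :: "'a::field \<Rightarrow> 'a \<Rightarrow> 'a \<Rightarrow> 'a \<Rightarrow> 'a \<Rightarrow> 'a vec3 set set" where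
  "conic_pts a b c d e = {proj_pt v | v. v \<noteq> (0, 0, 0) \<and> conic_form a b c d e v = 0}"

definition conic_nonsingular :: "'a::field \<Rightarrow> 'a \<Rightarrow> 'a \<Rightarrow> 'a \<Rightarrow> 'a \<Rightarrow> bool" where
  "conic_nonsingular a b c d e \<longleftrightarrow>
     \<not> (\<exists>v. v \<noteq> (0, 0, 0) \<and> conic_form a b c d e v = 0 \<and> conic_grad a b c d e v = (0, 0, 0))"

definition tangent_at :: "'a::field \<Rightarrow> 'a \<Rightarrow> 'a \<Rightarrow> 'a \<Rightarrow> 'a \<Rightarrow> 'a vec3 \<Rightarrow> 'a vec3 set set" where
  "tangent_at a b c d e v = line_of (conic_grad a b c d e v)"

definition tangent_lines :: "'a::field \<Rightarrow> 'a \<Rightarrow> 'a \<Rightarrow> 'a \<Rightarrow> 'a \<Rightarrow> 'a vec3 set set set" where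
  "tangent_lines a b c d e =
     {tangent_at a b c d e v | v. v \<noteq> (0, 0, 0) \<and> conic_form a b c d e v = 0}"

definition external_pt :: "'a::field \<Rightarrow> 'a \<Rightarrow> 'a \<Rightarrow> 'a \<Rightarrow> 'a \<Rightarrow> 'a vec3 set \<Rightarrow> bool" where
  "external_pt a b c d e P \<longleftrightarrow> P \<in> PG2 UNIV \<and> P \<notin> conic_pts a b c d e \<and>
     card {T \<in> tangent_lines a b c d e. P \<in> T} = 2"

end

(* The gradient of the form at Q = (0:1:0) is (b, 0, d), and d = b\<delta> with \<delta> = d1/b1 in F_q, so the
   tangent at Q is X + \<delta>Z = 0, i.e. b1 X + d1 Z = 0.  Besides Q, its points over F_q are
   P_t = (-\<delta> : t : 1), t in F_q.  The form takes the same value F(\<delta>, 0, -1) at every P_t, and this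
   value is nonzero since otherwise the conic would split into two lines; so no P_t is on the
   conic.  The polar line of P_t passes through Q and is not the tangent there, hence meets the
   conic in Q and exactly one further point R; the tangents through P_t are the two distinct
   tangents at Q and R.  So the external points of the line over F_q are the q points P_t. *)

theory Submission
  imports Defs "HOL-Number_Theory.Residues" "HOL-Computational_Algebra.Polynomial"
begin

section \<open>Finite fields\<close>

lemma CHAR_eq_prime_of_card:
  fixes p n :: nat
  assumes "card (UNIV :: 'a::{finite,field} set) = p ^ n" and "prime p" and "n > 0"
  shows "CHAR('a) = p"
proof -
  have prime_CHAR: "prime CHAR('a)"
    using prime_CHAR_semidom finite_imp_CHAR_pos[OF finite_UNIV] by blast
  have "CHAR('a) dvd p ^ n"
    using CHAR_dvd_CARD[where 'a = 'a] assms(1) by simp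
  then have "CHAR('a) dvd p"
    using prime_CHAR prime_dvd_power by blast
  then show ?thesis
    using prime_CHAR assms(2) primes_dvd_imp_eq by blast
qed

lemma two_neq_zero_if_odd_card:
  assumes "odd (card (UNIV :: 'a::{finite,field} set))"
  shows "(2::'a) \<noteq> 0"
proof
  assume "(2::'a) = 0"
  then have "CHAR('a) dvd 2"
    by (metis of_nat_eq_0_iff_char_dvd of_nat_numeral)
  moreover have "CHAR('a) \<noteq> 1"
    using of_nat_CHAR[where 'a = 'a] by auto
  ultimately have "CHAR('a) = 2"
    by (metis prime_nat_iff two_is_prime_nat)
  then show False
    using CHAR_dvd_CARD[where 'a = 'a] assms by simp
qed

lemma power_card_UNIV_eq_self:
  fixes x :: "'a::{finite,field}"
  shows "x ^ card (UNIV :: 'a set) = x"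
proof (cases "x = 0")
  case True
  then show ?thesis
    using finite_UNIV_card_ge_0[where 'a = 'a] by simp
next
  case False
  define U where "U = UNIV - {0::'a}"
  have "bij_betw ((*) x) U U"
    by (rule bij_betw_byWitness[where f' = "\<lambda>y. y / x"]) (use False in \<open>auto simp: U_def\<close>)
  then have "prod ((*) x) U = prod id U"
    using prod.reindex_bij_betw[of "(*) x" U U id] by simp
  moreover have "prod ((*) x) U = x ^ card U * prod id U"
    by (simp add: prod.distrib)
  moreover have "prod id U \<noteq> 0"
    by (simp add: U_def)
  ultimately have "x ^ card U = 1"
    by simp
  moreover have "card (UNIV :: 'a set) = Suc (card U)"
    unfolding U_def using card_Suc_Diff1[of UNIV "0::'a"] by simp
  ultimately show ?thesis
    by simp
qed

lemma power_power_eq_self_if_card_square: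
  fixes x :: "'a::{finite,field}"
  assumes "card (UNIV :: 'a set) = q\<^sup>2"
  shows "(x ^ q) ^ q = x"
  using power_card_UNIV_eq_self[of x] assms by (simp add: power2_eq_square power_mult)

lemma card_UNIV_eq_card_kernel_mult_card_range:
  fixes f :: "'a::{finite,ab_group_add} \<Rightarrow> 'b::ab_group_add"
  assumes additive: "\<And>x y. f (x + y) = f x + f y"
  shows "card (UNIV :: 'a set) = card {x. f x = 0} * card (range f)"
proof -
  have card_fibre: "card (f -` {f x0}) = card {x. f x = 0}" for x0
  proof -
    have "f (x - x0) = f x - f x0" for x
      using additive[of "x - x0" x0] by (simp add: algebra_simps)
    then have "bij_betw (\<lambda>k. k + x0) {x. f x = 0} (f -` {f x0})"
      by (intro bij_betw_byWitness[where f' = "\<lambda>x. x - x0"]) (auto simp: additive)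
    then show ?thesis
      by (simp add: bij_betw_same_card)
  qed
  have "(\<Union>u\<in>range f. f -` {u}) = UNIV"
    by auto
  then have "card (UNIV :: 'a set) = card (\<Union>u\<in>range f. f -` {u})"
    by simp
  also have "\<dots> = (\<Sum>u\<in>range f. card (f -` {u}))"
    by (rule card_UN_disjoint) auto
  also have "\<dots> = (\<Sum>u\<in>range f. card {x. f x = 0})"
    by (rule sum.cong) (auto simp: card_fibre)
  finally show ?thesis
    by simp
qed

lemma card_roots_power_plus_linear_le:
  fixes c :: "'a::idom"
  assumes "n \<ge> 2"
  shows "card {x. x ^ n + c * x = 0} \<le> n"
proof -
  define p where "p = monom 1 n + [:0, c:]"
  have "degree p = n"
    unfolding p_def using assms
    by (subst degree_add_eq_left) (auto simp: degree_monom_eq)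
  moreover have "{x. poly p x = 0} = {x. x ^ n + c * x = 0}"
    by (simp add: p_def poly_monom mult.commute)
  ultimately show ?thesis
    using card_poly_roots_bound[of p] assms by fastforce
qed

text \<open>The map \<open>x \<mapsto> x^q - x\<close> is additive, its kernel is the fixed field and its image
  consists of roots of \<open>u^q + u\<close>; counting gives \<open>q^2 \<le> q \<cdot> |kernel|\<close>.\<close>
lemma card_Frobenius_fixed_points:
  fixes p q k :: nat
  assumes card: "card (UNIV :: 'a::{finite,field} set) = q\<^sup>2"
    and "prime p" and "k > 0" and q: "q = p ^ k"
  shows "card {x::'a. x ^ q = x} = q"
proof -
  have CHAR: "CHAR('a) = p"
    using CHAR_eq_prime_of_card[of p "k * 2"] card assms(2,3) by (simp add: q power_mult)
  then have prime_CHAR: "prime CHAR('a)" and q: "q = CHAR('a) ^ k"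
    using \<open>prime p\<close> q by simp_all
  have q_ge_2: "q \<ge> 2"
    using q \<open>k > 0\<close> self_le_power[of "CHAR('a)" k] prime_ge_2_nat[OF prime_CHAR] by simp
  have frob_add: "(x + y) ^ q = x ^ q + y ^ q" for x y :: 'a
    using freshmans_dream'[OF prime_CHAR q] .
  have frob_diff: "(x - y) ^ q = x ^ q - y ^ q" for x y :: 'a
    using frob_add[of "x - y" y] by (simp add: algebra_simps)
  define \<phi> where "\<phi> x = x ^ q - x" for x :: 'a
  have "\<phi> x ^ q = - \<phi> x" for x
    unfolding \<phi>_def frob_diff power_power_eq_self_if_card_square[OF card] by simp
  then have range_roots: "range \<phi> \<subseteq> {u. u ^ q + 1 * u = 0}"
    by auto
  have "card (range \<phi>) \<le> q"
    using order_trans[OF card_mono[OF _ range_roots] card_roots_power_plus_linear_le[OF q_ge_2]]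
    by simp
  moreover have "\<phi> (x + y) = \<phi> x + \<phi> y" for x y
    unfolding \<phi>_def frob_add by (simp add: algebra_simps)
  then have "q * q = card {x. \<phi> x = 0} * card (range \<phi>)"
    using card_UNIV_eq_card_kernel_mult_card_range[of \<phi>] card by (simp add: power2_eq_square)
  ultimately have "q * q \<le> card {x. \<phi> x = 0} * q"
    by (metis mult_le_mono2)
  then have "q \<le> card {x::'a. x ^ q = x}"
    using q_ge_2 by (simp add: \<phi>_def)
  moreover have "card {x::'a. x ^ q = x} \<le> q"
    using card_roots_power_plus_linear_le[OF q_ge_2, of "-1::'a"] by simp
  ultimately show ?thesis
    by simp
qed

section \<open>Projective points, lines and tangents\<close>

lemma proj_pt_self: "(x, y, z) \<in> proj_pt (x, y, z)"
  unfolding proj_pt_def by (auto intro!: exI[of _ 1])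

lemma proj_pt_eqD:
  assumes "proj_pt (x, y, z) = proj_pt (x', y', z')"
  shows "\<exists>s. s \<noteq> 0 \<and> x = s * x' \<and> y = s * y' \<and> z = s * z'"
  using proj_pt_self[of x y z] unfolding assms by (force simp: proj_pt_def)

lemma proj_pt_smult:
  assumes "s \<noteq> 0"
  shows "proj_pt (s * x, s * y, s * z) = proj_pt (x, y, z)"
proof -
  have "(c * s) * u = c * (s * u)" "(c / s) * (s * u) = c * u" for c u
    using assms by simp_all
  then show ?thesis
    unfolding proj_pt_def using assms
    by (auto intro: exI[of _ "c * s" for c] exI[of _ "c / s" for c])
qed

fun dot3 :: "'a::comm_semiring_1 vec3 \<Rightarrow> 'a vec3 \<Rightarrow> 'a" where
  "dot3 (l1, l2, l3) (x, y, z) = l1 * x + l2 * y + l3 * z"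

lemma mem_line_of_iff:
  assumes "(x, y, z) \<noteq> (0, 0, 0)"
  shows "proj_pt (x, y, z) \<in> line_of (l1, l2, l3) \<longleftrightarrow> dot3 (l1, l2, l3) (x, y, z) = 0"
proof
  assume "proj_pt (x, y, z) \<in> line_of (l1, l2, l3)"
  then obtain x' y' z' where "proj_pt (x, y, z) = proj_pt (x', y', z')"
      and on_line: "l1 * x' + l2 * y' + l3 * z' = 0"
    unfolding line_of_def by auto
  then obtain s where "x = s * x'" "y = s * y'" "z = s * z'"
    using proj_pt_eqD by blast
  then have "dot3 (l1, l2, l3) (x, y, z) = s * (l1 * x' + l2 * y' + l3 * z')"
    by (simp add: algebra_simps)
  with on_line show "dot3 (l1, l2, l3) (x, y, z) = 0"
    by simp
next
  assume "dot3 (l1, l2, l3) (x, y, z) = 0"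
  then show "proj_pt (x, y, z) \<in> line_of (l1, l2, l3)"
    using assms unfolding line_of_def by auto
qed

lemma line_of_smult:
  assumes "k \<noteq> 0"
  shows "line_of (k * l1, k * l2, k * l3) = line_of (l1, l2, l3)"
proof -
  have "k * l1 * x + k * l2 * y + k * l3 * z = k * (l1 * x + l2 * y + l3 * z)" for x y z
    by (simp add: algebra_simps)
  then show ?thesis
    unfolding line_of_def using assms by simp
qed

lemma dot3_conic_grad_commute:
  "dot3 (conic_grad a b c d e v) w = dot3 (conic_grad a b c d e w) v"
  by (cases v, cases w) (simp add: conic_grad_def algebra_simps)

lemma mem_tangent_at_iff:
  assumes "(x, y, z) \<noteq> (0, 0, 0)"
  shows "proj_pt (x, y, z) \<in> tangent_at a b c d e v
    \<longleftrightarrow> dot3 (conic_grad a b c d e (x, y, z)) v = 0"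
proof -
  obtain l1 l2 l3 where l: "conic_grad a b c d e v = (l1, l2, l3)"
    by (cases "conic_grad a b c d e v")
  show ?thesis
    unfolding tangent_at_def l mem_line_of_iff[OF assms]
    by (metis dot3_conic_grad_commute l)
qed

lemma tangent_at_cong:
  assumes "proj_pt v = proj_pt w"
  shows "tangent_at a b c d e v = tangent_at a b c d e w"
proof -
  obtain x y z x' y' z' where v: "v = (x, y, z)" and w: "w = (x', y', z')"
    by (cases v, cases w)
  obtain s where "s \<noteq> 0" "x = s * x'" "y = s * y'" "z = s * z'"
    using proj_pt_eqD assms unfolding v w by blast
  moreover have "conic_grad a b c d e (s * x', s * y', s * z') =
      (s * (2 * a * x' + b * y' + c * z'), s * (b * x' + d * z'), s * (c * x' + d * y' + 2 * e * z'))"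
    unfolding conic_grad_def by (simp add: algebra_simps)
  ultimately show ?thesis
    unfolding v w tangent_at_def using line_of_smult by (simp add: conic_grad_def)
qed

section \<open>Tangents through a point of the tangent at (0:1:0)\<close>

lemma conic_form_on_line_through_010:
  "conic_form a b c d e (s * B, y, - s * A)
     = s * (s * conic_form a b c d e (B, 0, - A) + y * (b * B - d * A))"
  unfolding conic_form_def by (simp add: algebra_simps power2_eq_square)

text \<open>The point (0:1:0) lies on the conic; by the identity above, a line \<open>AX + BZ = 0\<close> through it
  meets the conic once more, at the following point, unless \<open>bB = dA\<close>, i.e. unless it is the
  tangent \<open>bX + dZ = 0\<close>.\<close>
definition second_intersection :: "'a::field \<Rightarrow> 'a \<Rightarrow> 'a \<Rightarrow> 'a \<Rightarrow> 'a \<Rightarrow> 'a \<Rightarrow> 'a \<Rightarrow> 'a vec3" where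
  "second_intersection a b c d e A B =
     (B, - conic_form a b c d e (B, 0, - A) / (b * B - d * A), - A)"

lemma second_intersection_on_conic:
  assumes "b * B - d * A \<noteq> 0"
  shows "conic_form a b c d e (second_intersection a b c d e A B) = 0"
proof -
  let ?F = "conic_form a b c d e (B, 0, - A)" and ?D = "b * B - d * A"
  have "conic_form a b c d e (second_intersection a b c d e A B) = ?F + (- ?F / ?D) * ?D"
    using conic_form_on_line_through_010[of a b c d e 1 B "- ?F / ?D" A]
    by (simp add: second_intersection_def)
  also have "\<dots> = 0"
    using assms by simp
  finally show ?thesis .
qed

lemma second_intersection_neq_0:
  assumes "b * B - d * A \<noteq> 0"
  shows "second_intersection a b c d e A B \<noteq> (0, 0, 0)"
  using assms by (auto simp: second_intersection_def)

lemma linear_eq_2_solution_multiple: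
  fixes A B x z :: "'a::field"
  assumes "A * x + B * z = 0" and "(A, B) \<noteq> (0, 0)"
  obtains s where "x = s * B" and "z = - s * A"
proof (cases "B = 0")
  case True
  with assms show ?thesis
    by (intro that[of "- z / A"]) (auto simp: field_simps)
next
  case False
  with assms(1) show ?thesis
    by (intro that[of "x / B"]) (auto simp: field_simps add_eq_0_iff2)
qed

lemma conic_points_on_line_through_010:
  assumes "b * B - d * A \<noteq> 0" and "(x, y, z) \<noteq> (0, 0, 0)"
    and "conic_form a b c d e (x, y, z) = 0" and "A * x + B * z = 0"
  shows "proj_pt (x, y, z) = proj_pt (0, 1, 0)
    \<or> proj_pt (x, y, z) = proj_pt (second_intersection a b c d e A B)"
proof -
  have "(A, B) \<noteq> (0, 0)"
    using assms(1) by auto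
  then obtain s where x: "x = s * B" and z: "z = - s * A"
    using assms(4) linear_eq_2_solution_multiple by blast
  show ?thesis
  proof (cases "s = 0")
    case True
    then have "proj_pt (x, y, z) = proj_pt (y * 0, y * 1, y * 0)"
      by (simp add: x z)
    also have "\<dots> = proj_pt (0, 1, 0)"
      using assms(2) True by (intro proj_pt_smult) (simp add: x z)
    finally show ?thesis ..
  next
    case False
    let ?F = "conic_form a b c d e (B, 0, - A)" and ?D = "b * B - d * A"
    have yD: "y * ?D = - (s * ?F)"
      using assms(3) conic_form_on_line_through_010[of a b c d e s B y A] False
      by (simp add: x z eq_neg_iff_add_eq_0 add.commute)
    define y0 where "y0 = - ?F / ?D"
    have "y = y * ?D / ?D"
      using assms(1) by simp
    also have "\<dots> = s * y0"
      unfolding yD y0_def by simp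
    finally have "y = s * y0" .
    then have "(x, y, z) = (s * B, s * y0, s * - A)"
      by (simp add: x z)
    moreover have "second_intersection a b c d e A B = (B, y0, - A)"
      by (simp add: second_intersection_def y0_def)
    ultimately show ?thesis
      using proj_pt_smult[OF False, of B y0 "- A"] by simp
  qed
qed

lemma tangent_at_010_neq_tangent_at_second_intersection:
  assumes "b * B - d * A \<noteq> 0"
  shows "tangent_at a b c d e (0, 1, 0) \<noteq> tangent_at a b c d e (second_intersection a b c d e A B)"
proof -
  have "proj_pt (0, 1, 0) \<in> tangent_at a b c d e (0, 1, 0)"
    by (simp add: mem_tangent_at_iff conic_grad_def)
  moreover have "proj_pt (0, 1, 0) \<notin> tangent_at a b c d e (second_intersection a b c d e A B)"
    using assms by (simp add: mem_tangent_at_iff conic_grad_def second_intersection_def)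
  ultimately show ?thesis
    by blast
qed

lemma tangent_lines_through_pt:
  assumes "b * B - d * A \<noteq> 0" and "w \<noteq> (0, 0, 0)" and "conic_grad a b c d e w = (A, 0, B)"
  shows "{T \<in> tangent_lines a b c d e. proj_pt w \<in> T}
    = {tangent_at a b c d e (0, 1, 0), tangent_at a b c d e (second_intersection a b c d e A B)}"
proof -
  obtain p1 p2 p3 where w: "w = (p1, p2, p3)"
    by (cases w)
  have on_tangent: "proj_pt w \<in> tangent_at a b c d e (x, y, z) \<longleftrightarrow> A * x + B * z = 0" for x y z
    using mem_tangent_at_iff[of p1 p2 p3] assms(2,3) unfolding w by simp
  let ?R = "second_intersection a b c d e A B"
  show ?thesis
  proof (intro equalityI subsetI)
    fix T
    assume "T \<in> {T \<in> tangent_lines a b c d e. proj_pt w \<in> T}"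
    then obtain x y z where T: "T = tangent_at a b c d e (x, y, z)" and "(x, y, z) \<noteq> (0, 0, 0)"
      and "conic_form a b c d e (x, y, z) = 0" and "A * x + B * z = 0"
      unfolding tangent_lines_def using on_tangent by auto
    then have "proj_pt (x, y, z) = proj_pt (0, 1, 0) \<or> proj_pt (x, y, z) = proj_pt ?R"
      using conic_points_on_line_through_010[OF assms(1)] by blast
    then show "T \<in> {tangent_at a b c d e (0, 1, 0), tangent_at a b c d e ?R}"
      unfolding T using tangent_at_cong by blast
  next
    fix T
    assume T: "T \<in> {tangent_at a b c d e (0, 1, 0), tangent_at a b c d e ?R}"
    have "proj_pt w \<in> tangent_at a b c d e (0, 1, 0)" "proj_pt w \<in> tangent_at a b c d e ?R"
      by (simp_all add: on_tangent second_intersection_def)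
    moreover have "tangent_at a b c d e (0, 1, 0) \<in> tangent_lines a b c d e"
      unfolding tangent_lines_def by (force simp: conic_form_def)
    moreover have "tangent_at a b c d e ?R \<in> tangent_lines a b c d e"
      unfolding tangent_lines_def
      using second_intersection_neq_0 second_intersection_on_conic assms(1) by blast
    ultimately show "T \<in> {T \<in> tangent_lines a b c d e. proj_pt w \<in> T}"
      using T by blast
  qed
qed

lemma nonsingular_conic_form_ne_0:
  assumes "conic_nonsingular a b c d e" and "b \<noteq> 0" and "d = b * \<delta>"
  shows "conic_form a b c d e (\<delta>, 0, -1) \<noteq> 0"
proof
  assume "conic_form a b c d e (\<delta>, 0, -1) = 0"
  moreover have "e = c * \<delta> - a * \<delta>\<^sup>2 + conic_form a b c d e (\<delta>, 0, -1)"
    by (simp add: conic_form_def power2_eq_square)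
  ultimately have e: "e = c * \<delta> - a * \<delta>\<^sup>2"
    by simp
  \<comment> \<open>The form is then \<open>(X + \<delta>Z)(aX + bY + (c - a\<delta>)Z)\<close>, singular where the two lines meet.\<close>
  define v where "v = (- d * b, 2 * a * d - c * b, b\<^sup>2)"
  have "v \<noteq> (0, 0, 0)"
    using assms(2) by (simp add: v_def)
  moreover have "conic_form a b c d e v = 0"
    unfolding v_def conic_form_def e assms(3) by (simp add: algebra_simps power2_eq_square)
  moreover have "conic_grad a b c d e v = (0, 0, 0)"
    unfolding v_def conic_grad_def e assms(3) by (simp add: algebra_simps power2_eq_square)
  ultimately show False
    using assms(1) unfolding conic_nonsingular_def by blast
qed

lemma tangent_at_010:
  assumes "b \<noteq> 0" and "d = b * \<delta>"
  shows "tangent_at a b c d e (0, 1, 0) = line_of (1, 0, \<delta>)"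
  using line_of_smult[of b 1 0 \<delta>] assms by (simp add: tangent_at_def conic_grad_def)

lemma tangent_at_010_meets_conic_only_at_010:
  assumes "d = b * \<delta>" and "conic_form a b c d e (\<delta>, 0, -1) \<noteq> 0"
  shows "proj_pt (- \<delta>, t, 1) \<notin> conic_pts a b c d e"
proof
  assume "proj_pt (- \<delta>, t, 1) \<in> conic_pts a b c d e"
  then obtain x y z where on_conic: "conic_form a b c d e (x, y, z) = 0"
      and "proj_pt (x, y, z) = proj_pt (- \<delta>, t, 1)"
    unfolding conic_pts_def by auto
  then obtain s where "s \<noteq> 0" "x = s * - \<delta>" "z = s * 1"
    using proj_pt_eqD by blast
  with on_conic have "conic_form a b c d e (- s * \<delta>, y, - (- s) * 1) = 0"
    by simp
  then have "s * s * conic_form a b c d e (\<delta>, 0, -1) = 0"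
    using conic_form_on_line_through_010[of a b c d e "- s" \<delta> y 1] assms(1) by simp
  then show False
    using \<open>s \<noteq> 0\<close> assms(2) by simp
qed

lemma external_pt_on_tangent_at_010:
  fixes \<delta> t :: "'a::field"
  assumes "(2::'a) \<noteq> 0" and "b \<noteq> 0" and "d = b * \<delta>" and "conic_nonsingular a b c d e"
  shows "external_pt a b c d e (proj_pt (- \<delta>, t, 1))"
proof -
  let ?k = "conic_form a b c d e (\<delta>, 0, -1)"
  have "?k \<noteq> 0"
    using nonsingular_conic_form_ne_0 assms(2-4) by blast
  define A B where "A = c - 2 * a * \<delta> + b * t" and "B = 2 * e - c * \<delta> + d * t"
  have grad: "conic_grad a b c d e (- \<delta>, t, 1) = (A, 0, B)"
    by (simp add: conic_grad_def A_def B_def assms(3) algebra_simps)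
  have "b * B - d * A = 2 * b * ?k"
    by (simp add: A_def B_def assms(3) conic_form_def algebra_simps power2_eq_square)
  then have secant: "b * B - d * A \<noteq> 0"
    using assms(1,2) \<open>?k \<noteq> 0\<close> by simp
  have "proj_pt (- \<delta>, t, 1) \<notin> conic_pts a b c d e"
    using tangent_at_010_meets_conic_only_at_010[OF assms(3) \<open>?k \<noteq> 0\<close>] .
  moreover have "card {T \<in> tangent_lines a b c d e. proj_pt (- \<delta>, t, 1) \<in> T} = 2"
    using tangent_lines_through_pt[OF secant _ grad]
      tangent_at_010_neq_tangent_at_second_intersection[OF secant] by simp
  moreover have "proj_pt (- \<delta>, t, 1) \<in> PG2 UNIV"
    unfolding PG2_def by force
  ultimately show ?thesis
    unfolding external_pt_def by blast
qed

lemma external_pts_on_tangent_at_010: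
  fixes K :: "'a::field set"
  assumes "(2::'a) \<noteq> 0" and "b \<noteq> 0" and "d = b * \<delta>" and "conic_nonsingular a b c d e"
    and "- \<delta> \<in> K" and "1 \<in> K" and div_closed: "\<And>x y. x \<in> K \<Longrightarrow> y \<in> K \<Longrightarrow> x / y \<in> K"
  shows "{P \<in> PG2 K. P \<in> line_of (1, 0, \<delta>) \<and> external_pt a b c d e P}
    = (\<lambda>t. proj_pt (- \<delta>, t, 1)) ` K"
proof (intro equalityI subsetI)
  fix P
  assume "P \<in> {P \<in> PG2 K. P \<in> line_of (1, 0, \<delta>) \<and> external_pt a b c d e P}"
  then have "P \<in> PG2 K" and on_line: "P \<in> line_of (1, 0, \<delta>)" and ext: "external_pt a b c d e P"
    by auto
  then obtain x y z where P: "P = proj_pt (x, y, z)" and "y \<in> K" "z \<in> K"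
    and nz: "(x, y, z) \<noteq> (0, 0, 0)"
    unfolding PG2_def by blast
  have x: "x = - \<delta> * z"
    using on_line mem_line_of_iff[OF nz] unfolding P by (simp add: eq_neg_iff_add_eq_0)
  have "z \<noteq> 0"
  proof
    assume "z = 0"
    then have "P = proj_pt (y * 0, y * 1, y * 0)" and "y \<noteq> 0"
      using P x nz by simp_all
    then have "P = proj_pt (0, 1, 0)"
      using proj_pt_smult[of y 0 1 0] by simp
    moreover have "proj_pt (0, 1, 0) \<in> conic_pts a b c d e"
      unfolding conic_pts_def conic_form_def by force
    ultimately show False
      using ext unfolding external_pt_def by blast
  qed
  have "P = proj_pt (z * - \<delta>, z * (y / z), z * 1)"
    using P x \<open>z \<noteq> 0\<close> by (simp add: mult.commute)
  also have "\<dots> = proj_pt (- \<delta>, y / z, 1)"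
    using \<open>z \<noteq> 0\<close> by (rule proj_pt_smult)
  finally show "P \<in> (\<lambda>t. proj_pt (- \<delta>, t, 1)) ` K"
    using div_closed \<open>y \<in> K\<close> \<open>z \<in> K\<close> by blast
next
  fix P
  assume "P \<in> (\<lambda>t. proj_pt (- \<delta>, t, 1)) ` K"
  then obtain t where "t \<in> K" and P: "P = proj_pt (- \<delta>, t, 1)"
    by blast
  have nz: "(- \<delta>, t, 1::'a) \<noteq> (0, 0, 0)"
    by simp
  then have "P \<in> PG2 K"
    unfolding PG2_def P using \<open>t \<in> K\<close> assms(5,6) by blast
  moreover have "P \<in> line_of (1, 0, \<delta>)"
    unfolding P mem_line_of_iff[OF nz] by simp
  moreover have "external_pt a b c d e P"
    unfolding P using assms(1-4) by (rule external_pt_on_tangent_at_010)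
  ultimately show "P \<in> {P \<in> PG2 K. P \<in> line_of (1, 0, \<delta>) \<and> external_pt a b c d e P}"
    by blast
qed

lemma proportional_coords_ratio:
  fixes \<epsilon> b1 b2 d1 d2 :: "'a::field"
  assumes "b1 * d2 = b2 * d1" and "b1 + \<epsilon> * b2 \<noteq> 0" and "(b1, d1) \<noteq> (0, 0)"
  shows "b1 \<noteq> 0" and "d1 + \<epsilon> * d2 = (b1 + \<epsilon> * b2) * (d1 / b1)"
proof -
  show "b1 \<noteq> 0"
    using assms by auto
  have "(d1 + \<epsilon> * d2) * b1 = d1 * b1 + \<epsilon> * (b1 * d2)"
    by (simp add: algebra_simps)
  also have "\<dots> = (b1 + \<epsilon> * b2) * d1"
    by (simp add: assms(1) algebra_simps)
  finally show "d1 + \<epsilon> * d2 = (b1 + \<epsilon> * b2) * (d1 / b1)"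
    using \<open>b1 \<noteq> 0\<close> by (simp add: field_simps)
qed

theorem mainTheorem11:
  fixes q :: nat
    and \<omega> \<epsilon> a b c d e b1 b2 d1 d2 :: "'a::{finite, field}"
  assumes "card (UNIV :: 'a set) = q^2"
    and "\<exists>p k. prime p \<and> k > 0 \<and> q = p ^ k"
    and "odd q"
    and "\<omega>^q = \<omega>" and "\<not> (\<exists>y. y^q = y \<and> y^2 = \<omega>)"
    and "\<epsilon>^2 = \<omega>"
    and "b1^q = b1" and "b2^q = b2" and "d1^q = d1" and "d2^q = d2"
    and "b = b1 + \<epsilon> * b2" and "d = d1 + \<epsilon> * d2"
    and "conic_nonsingular a b c d e"
    and "b \<noteq> 0"
    and "b1 * d2 = b2 * d1"
    and "(b1, d1) \<noteq> (0, 0)"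
  shows "line_of (b1, 0, d1) = tangent_at a b c d e (0, 1, 0)
    \<and> card {P \<in> PG2 {x. x^q = x}. P \<in> line_of (b1, 0, d1) \<and> external_pt a b c d e P} = q"
proof -
  obtain p k where "prime p" and "k > 0" and "q = p ^ k"
    using assms(2) by blast
  define K where "K = {x::'a. x ^ q = x}"
  have "card K = q"
    unfolding K_def using card_Frobenius_fixed_points assms(1) \<open>prime p\<close> \<open>k > 0\<close> \<open>q = p ^ k\<close>
    by blast
  have two: "(2::'a) \<noteq> 0"
    using two_neq_zero_if_odd_card[where 'a = 'a] assms(1,3) by simp
  define \<delta> where "\<delta> = d1 / b1"
  have "b1 \<noteq> 0" and d: "d = b * \<delta>"
    using proportional_coords_ratio[OF assms(15) _ assms(16)] assms(11,12,14)
    unfolding \<delta>_def by simp_all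
  have tangent: "tangent_at a b c d e (0, 1, 0) = line_of (b1, 0, d1)"
    using tangent_at_010[OF assms(14) d] line_of_smult[OF \<open>b1 \<noteq> 0\<close>, of 1 0 \<delta>] \<open>b1 \<noteq> 0\<close>
    by (simp add: \<delta>_def)
  have "- \<delta> \<in> K"
    unfolding K_def \<delta>_def using assms(3,7,9) by (simp add: power_divide power_minus_odd)
  then have "{P \<in> PG2 K. P \<in> line_of (b1, 0, d1) \<and> external_pt a b c d e P}
      = (\<lambda>t. proj_pt (- \<delta>, t, 1)) ` K"
    using external_pts_on_tangent_at_010[OF two assms(14) d assms(13), of K]
      tangent_at_010[OF assms(14) d] tangent
    by (simp add: K_def power_divide)
  moreover have "inj_on (\<lambda>t. proj_pt (- \<delta>, t, 1)) K"
    by (rule inj_onI) (auto dest: proj_pt_eqD)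
  ultimately show ?thesis
    using tangent \<open>card K = q\<close> card_image unfolding K_def by fastforce
qed

end
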